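(* Let $P$ be a positive, completely labelled causal logic program, let $p$ be an atom, let $\Pi_p$ be the set of non-redundant proofs of $p$ with respect to $P$, and let $I$ be the least causal model of $P$. Then for every causal graph $G$: $G\in\{\mathrm{graph}(\pi)\mid\pi\in\Pi_p\}$ if and only if $G$ is a $\le$-maximal element of $I(p)$.
   Context: Causal graphs, causal values, causal programs, causal models and least models are as follows. Causal graphs over a label set $Lb$: graphs $\langle V,E\rangle$, $V\subseteq Lb$, reflexively and transitively closed; $G\le G'$ iff $G\supseteq G'$; $G<G'$ iff $G\le G'$ and $G\ne G'$; $G*G'=(G\cup G')^*$, $G\cdot G'$ is the closure of the graph with vertices $V\cup V'$ and edges $E\cup E'\cup(V\times V')$. Causal values are down-sets of causal graphs; $*$ is intersection, $+$ union, $U\cdot U'={\downarrow}\{G\cdot G'\mid G\in U,G'\in U'\}$; label $l$ denotes ${\downarrow}$ of the graph with single edge $(l,l)$, and $1$ the set of all causal graphs. A rule is $t:H\leftarrow B_1,\dots,B_n$ with $t\in Lb\cup\{1\}$; a positive program has no default negation; a program is completely labelled if every rule has a label in $Lb$ and no two rules share a label. A causal interpretation $I$ (atoms to causal values) is a model of positive $P$ iff $(I(B_1)*\dots*I(B_n))\cdot t\subseteq I(H)$ for every rule; the least model exists. A proof of atom $p$ w.r.t. $P$ is a derivation tree $\pi(p)=\frac{\pi(B_1)\ \cdots\ \pi(B_n)}{p}(R)$ with $R\in P$, head $p$ and body $\{B_1,\dots,B_n\}$ (antecedent $\top$ when $n=0$). For a completely labelled program, $\mathrm{graph}(\pi)$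 is the reflexive–transitive closure of the graph whose vertices are the labels of all rules used in $\pi$ and which contains, for each sub-derivation using rule $R$ with label $m$ and immediate subproofs $\pi(B_i)$ whose last rule has label $l_i$, the edge $(l_i,m)$. A proof $\pi$ of $p$ is redundant if there is another proof $\pi'$ of $p$ with $\mathrm{graph}(\pi)<\mathrm{graph}(\pi')$; otherwise it is non-redundant. *)

theory Defs
  imports Main
begin

text \<open>Labels are the elements of the type 'l (the label set Lb).
  A graph is a pair (V, E) of a vertex set and an edge relation.\<close>

type_synonym 'l cgraph = "'l set \<times> ('l \<times> 'l) set"

definition causal_graph :: "'l cgraph \<Rightarrow> bool" where
  "causal_graph G \<longleftrightarrow> snd G \<subseteq> fst G \<times> fst G \<and> Id_on (fst G) \<subseteq> snd G \<and> trans (snd G)"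

definition gclose :: "'l cgraph \<Rightarrow> 'l cgraph" where
  "gclose G = (fst G, (snd G)\<^sup>+ \<union> Id_on (fst G))"

definition gle :: "'l cgraph \<Rightarrow> 'l cgraph \<Rightarrow> bool" where
  "gle G G' \<longleftrightarrow> fst G' \<subseteq> fst G \<and> snd G' \<subseteq> snd G"

definition gless :: "'l cgraph \<Rightarrow> 'l cgraph \<Rightarrow> bool" where
  "gless G G' \<longleftrightarrow> gle G G' \<and> G \<noteq> G'"

definition gprod :: "'l cgraph \<Rightarrow> 'l cgraph \<Rightarrow> 'l cgraph" where
  "gprod G G' = gclose (fst G \<union> fst G', snd G \<union> snd G' \<union> (fst G \<times> fst G'))"

definition causal_value :: "'l cgraph set \<Rightarrow> bool" where
  "causal_value U \<longleftrightarrow> (\<forall>G\<in>U. causal_graph G) \<and>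
     (\<forall>G\<in>U. \<forall>G'. causal_graph G' \<and> gle G' G \<longrightarrow> G' \<in> U)"

definition downset :: "'l cgraph set \<Rightarrow> 'l cgraph set" where
  "downset S = {G. causal_graph G \<and> (\<exists>H\<in>S. gle G H)}"

definition one_val :: "'l cgraph set" where
  "one_val = {G. causal_graph G}"

definition vprod :: "'l cgraph set \<Rightarrow> 'l cgraph set \<Rightarrow> 'l cgraph set" where
  "vprod U U' = downset {gprod G G' | G G'. G \<in> U \<and> G' \<in> U'}"

text \<open>The value denoted by a rule label t \<in> Lb \<union> {1}; None stands for 1.\<close>
definition label_val :: "'l option \<Rightarrow> 'l cgraph set" where
  "label_val t = (case t of None \<Rightarrow> one_val | Some l \<Rightarrow> downset {({l}, {(l, l)})})"

text \<open>A rule  t : H \<leftarrow> B1, ..., Bn, not C1, ..., not Cm  with label t \<in> Lb \<union> {1}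
  (None = 1), head H, positive body [B1..Bn], negative body [C1..Cm].\<close>
datatype ('a, 'l) rule =
  Rule (rlabel: "'l option") (rhead: 'a) (rpos: "'a list") (rneg: "'a list")

type_synonym ('a, 'l) program = "('a, 'l) rule set"

definition positive_program :: "('a, 'l) program \<Rightarrow> bool" where
  "positive_program P \<longleftrightarrow> (\<forall>R\<in>P. rneg R = [])"

definition completely_labelled :: "('a, 'l) program \<Rightarrow> bool" where
  "completely_labelled P \<longleftrightarrow> (\<forall>R\<in>P. rlabel R \<noteq> None) \<and>
     (\<forall>R\<in>P. \<forall>R'\<in>P. rlabel R = rlabel R' \<longrightarrow> R = R')"

type_synonym ('a, 'l) cinterp = "'a \<Rightarrow> 'l cgraph set"

definition causal_interp :: "('a, 'l) cinterp \<Rightarrow> bool" where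
  "causal_interp I \<longleftrightarrow> (\<forall>a. causal_value (I a))"

text \<open>I(B1) * ... * I(Bn): intersection, the empty product being 1.\<close>
definition body_val :: "('a, 'l) cinterp \<Rightarrow> 'a list \<Rightarrow> 'l cgraph set" where
  "body_val I bs = {G \<in> one_val. \<forall>b\<in>set bs. G \<in> I b}"

definition is_model :: "('a, 'l) program \<Rightarrow> ('a, 'l) cinterp \<Rightarrow> bool" where
  "is_model P I \<longleftrightarrow> causal_interp I \<and>
     (\<forall>R\<in>P. vprod (body_val I (rpos R)) (label_val (rlabel R)) \<subseteq> I (rhead R))"

definition least_model :: "('a, 'l) program \<Rightarrow> ('a, 'l) cinterp \<Rightarrow> bool" where
  "least_model P I \<longleftrightarrow> is_model P I \<and> (\<forall>J. is_model P J \<longrightarrow> (\<forall>a. I a \<subseteq> J a))"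

datatype ('a, 'l) ptree = PNode "('a, 'l) rule" "('a, 'l) ptree list"

fun proot :: "('a, 'l) ptree \<Rightarrow> ('a, 'l) rule" where
  "proot (PNode R subs) = R"

inductive is_proof :: "('a, 'l) program \<Rightarrow> ('a, 'l) ptree \<Rightarrow> 'a \<Rightarrow> bool" for P where
  "R \<in> P \<Longrightarrow> rhead R = p \<Longrightarrow> list_all2 (is_proof P) subs (rpos R)
     \<Longrightarrow> is_proof P (PNode R subs) p"

definition lab :: "('a, 'l) rule \<Rightarrow> 'l" where
  "lab R = the (rlabel R)"

fun pverts :: "('a, 'l) ptree \<Rightarrow> 'l set" where
  "pverts (PNode R subs) = insert (lab R) (\<Union>s\<in>set subs. pverts s)"

fun pedges :: "('a, 'l) ptree \<Rightarrow> ('l \<times> 'l) set" where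
  "pedges (PNode R subs) =
     (\<Union>s\<in>set subs. insert (lab (proot s), lab R) (pedges s))"

definition pgraph :: "('a, 'l) ptree \<Rightarrow> 'l cgraph" where
  "pgraph \<pi> = gclose (pverts \<pi>, pedges \<pi>)"

definition redundant :: "('a, 'l) program \<Rightarrow> ('a, 'l) ptree \<Rightarrow> 'a \<Rightarrow> bool" where
  "redundant P \<pi> p \<longleftrightarrow> (\<exists>\<pi>'. is_proof P \<pi>' p \<and> gless (pgraph \<pi>) (pgraph \<pi>'))"

definition nonredundant_proofs :: "('a, 'l) program \<Rightarrow> 'a \<Rightarrow> ('a, 'l) ptree set" where
  "nonredundant_proofs P p = {\<pi>. is_proof P \<pi> p \<and> \<not> redundant P \<pi> p}"

end

theory Submission
  imports Defs
begin

(* For a completely labelled program P, the least model I assigns to every atom a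
   exactly the down-set of the graphs of the proofs of a:
       I a = downset (pgraph ` {\<pi>. is_proof P \<pi> a}).
   Soundness: every model contains the graph of every proof.  By induction on the
   proof: if its last rule has label l and G is the closure of the union of the
   subproof graphs, then G lies below every subproof graph, hence in the value of
   every body atom, and the graph of the whole proof lies below G \<cdot> l.
   Completeness: the down-set of proof graphs is itself a model; for a graph below
   G \<cdot> l, where G lies below some proof graph of each body atom, those proofs
   combine with the rule into a proof whose graph lies above G \<cdot> l.

   Given this description of I, the theorem reduces to a general fact about
   down-sets: the maximal elements of downset S are exactly the maximal elements
   of S; and the maximal elements of the set of proof graphs of p are, by
   definition, the graphs of the non-redundant proofs of p. *)

lemma gle_refl: "gle G G"
  unfolding gle_def by auto

lemma gle_trans: "gle A B \<Longrightarrow> gle B C \<Longrightarrow> gle A C"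
  unfolding gle_def by auto

lemma gle_antisym: "gle A B \<Longrightarrow> gle B A \<Longrightarrow> A = B"
  unfolding gle_def by (auto simp: prod_eq_iff)

lemma gclose_causal:
  assumes "E \<subseteq> V \<times> V"
  shows "causal_graph (gclose (V, E))"
proof -
  have "E\<^sup>+ \<subseteq> V \<times> V"
    using assms trancl_subset_Sigma by blast
  moreover have "trans (E\<^sup>+ \<union> Id_on V)"
    unfolding trans_def by (auto intro: trancl_trans)
  ultimately show ?thesis
    unfolding causal_graph_def gclose_def by auto
qed

lemma gle_gclose_iff:
  assumes "causal_graph H"
  shows "gle H (gclose (V, E)) \<longleftrightarrow> V \<subseteq> fst H \<and> E \<subseteq> snd H"
proof
  assume "V \<subseteq> fst H \<and> E \<subseteq> snd H"
  moreover have "trans (snd H)" and "Id_on (fst H) \<subseteq> snd H"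
    using assms unfolding causal_graph_def by auto
  ultimately have "E\<^sup>+ \<subseteq> snd H" and "Id_on V \<subseteq> snd H"
    using trancl_mono[of _ E "snd H"] trancl_id[of "snd H"] by (blast, blast)
  with \<open>V \<subseteq> fst H \<and> E \<subseteq> snd H\<close> show "gle H (gclose (V, E))"
    unfolding gle_def gclose_def by auto
qed (auto simp: gle_def gclose_def)

lemma gprod_causal:
  assumes "causal_graph G" and "causal_graph G'"
  shows "causal_graph (gprod G G')"
  unfolding gprod_def
  by (rule gclose_causal) (use assms in \<open>auto simp: causal_graph_def\<close>)

lemma gprod_contains:
  "fst (gprod G G') = fst G \<union> fst G'"
  "snd G \<union> snd G' \<union> fst G \<times> fst G' \<subseteq> snd (gprod G G')"
  unfolding gprod_def gclose_def by auto

lemma gle_gprodI: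
  assumes "causal_graph H" and "gle H G" and "gle H G'" and "fst G \<times> fst G' \<subseteq> snd H"
  shows "gle H (gprod G G')"
proof -
  have "fst G \<union> fst G' \<subseteq> fst H" and "snd G \<union> snd G' \<subseteq> snd H"
    using assms(2,3) unfolding gle_def by auto
  with assms(4) show ?thesis
    unfolding gprod_def gle_gclose_iff[OF assms(1)] by auto
qed

lemma downset_value: "causal_value (downset S)"
  unfolding causal_value_def downset_def using gle_trans by blast

lemma causal_value_downclosed:
  "causal_value U \<Longrightarrow> G \<in> U \<Longrightarrow> causal_graph H \<Longrightarrow> gle H G \<Longrightarrow> H \<in> U"
  unfolding causal_value_def by blast

lemma vprod_iff:
  "H \<in> vprod U U' \<longleftrightarrow> causal_graph H \<and> (\<exists>G\<in>U. \<exists>G'\<in>U'. gle H (gprod G G'))"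
  unfolding vprod_def downset_def by blast

lemma label_graph_in_label_val: "({l}, {(l, l)}) \<in> label_val (Some l)"
  unfolding label_val_def downset_def causal_graph_def
  by (auto simp: gle_def Id_on_def trans_def)

lemma label_val_SomeD:
  "G \<in> label_val (Some l) \<Longrightarrow> causal_graph G \<and> l \<in> fst G"
  unfolding label_val_def downset_def gle_def by auto

lemma downset_maximal_iff:
  assumes "\<forall>H\<in>S. causal_graph H"
  shows "(G \<in> downset S \<and> (\<forall>G'\<in>downset S. \<not> gless G G')) \<longleftrightarrow>
         (G \<in> S \<and> (\<forall>H\<in>S. \<not> gless G H))"
proof
  assume max: "G \<in> downset S \<and> (\<forall>G'\<in>downset S. \<not> gless G G')"
  then obtain H where "H \<in> S" and "gle G H"
    unfolding downset_def by blast
  have S_sub: "S \<subseteq> downset S"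
    using assms gle_refl unfolding downset_def by blast
  with max \<open>H \<in> S\<close> \<open>gle G H\<close> have "G = H"
    unfolding gless_def by blast
  with max \<open>H \<in> S\<close> S_sub show "G \<in> S \<and> (\<forall>H\<in>S. \<not> gless G H)"
    by blast
next
  assume max: "G \<in> S \<and> (\<forall>H\<in>S. \<not> gless G H)"
  have "\<not> gless G G'" if "G' \<in> downset S" for G'
  proof
    assume "gless G G'"
    obtain H where "H \<in> S" and "gle G' H"
      using \<open>G' \<in> downset S\<close> unfolding downset_def by blast
    with \<open>gless G G'\<close> have "gless G H"
      unfolding gless_def using gle_trans gle_antisym by metis
    with max \<open>H \<in> S\<close> show False by blast
  qed
  with max assms gle_refl show "G \<in> downset S \<and> (\<forall>G'\<in>downset S. \<not> gless G G')"
    unfolding downset_def by blast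
qed

lemma labelled_rule: "completely_labelled P \<Longrightarrow> R \<in> P \<Longrightarrow> rlabel R = Some (lab R)"
  unfolding completely_labelled_def lab_def by auto

lemma root_in_pverts: "lab (proot \<pi>) \<in> pverts \<pi>"
  by (cases \<pi>) auto

lemma pedges_sub_pverts: "pedges \<pi> \<subseteq> pverts \<pi> \<times> pverts \<pi>"
proof (induction \<pi>)
  case (PNode R subs)
  then show ?case
    using root_in_pverts by fastforce
qed

lemma pgraph_causal: "causal_graph (pgraph \<pi>)"
  unfolding pgraph_def by (rule gclose_causal[OF pedges_sub_pverts])

lemma pgraph_contains: "fst (pgraph \<pi>) = pverts \<pi>" "pedges \<pi> \<subseteq> snd (pgraph \<pi>)"
  unfolding pgraph_def gclose_def by auto

lemma gle_pgraph_iff: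
  "causal_graph H \<Longrightarrow> gle H (pgraph \<pi>) \<longleftrightarrow> pverts \<pi> \<subseteq> fst H \<and> pedges \<pi> \<subseteq> snd H"
  unfolding pgraph_def by (rule gle_gclose_iff)

lemma pgraph_le_subproof:
  assumes "s \<in> set subs"
  shows "gle (pgraph (PNode R subs)) (pgraph s)"
proof -
  have "pverts s \<subseteq> pverts (PNode R subs)" "pedges s \<subseteq> pedges (PNode R subs)"
    using assms by auto
  then show ?thesis
    using pgraph_contains[of "PNode R subs"] by (simp add: gle_pgraph_iff[OF pgraph_causal])
qed

lemma pverts_reach_root:
  "v \<in> pverts \<pi> \<Longrightarrow> (v, lab (proot \<pi>)) \<in> snd (pgraph \<pi>)"
proof (induction \<pi>)
  case (PNode R subs)
  let ?\<pi> = "PNode R subs"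
  have tr: "trans (snd (pgraph ?\<pi>))" and refl: "Id_on (pverts ?\<pi>) \<subseteq> snd (pgraph ?\<pi>)"
    using pgraph_causal[of ?\<pi>] pgraph_contains(1)[of ?\<pi>] unfolding causal_graph_def by auto
  show ?case
  proof (cases "v = lab R")
    case True
    then show ?thesis using refl by auto
  next
    case False
    then obtain s where s: "s \<in> set subs" "v \<in> pverts s"
      using PNode.prems by auto
    have "(v, lab (proot s)) \<in> snd (pgraph ?\<pi>)"
      using PNode.IH[OF s] pgraph_le_subproof[OF s(1)] unfolding gle_def by blast
    moreover have "(lab (proot s), lab R) \<in> snd (pgraph ?\<pi>)"
      using s(1) pgraph_contains(2)[of ?\<pi>] by auto
    ultimately show ?thesis
      using tr by (auto dest: transD)
  qed
qed

section \<open>Soundness: models contain all proof graphs\<close>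

lemma model_contains_pgraph:
  assumes labelled: "completely_labelled P" and model: "is_model P I"
  shows "is_proof P \<pi> a \<Longrightarrow> pgraph \<pi> \<in> I a"
proof (induction rule: is_proof.induct)
  case (1 R a subs)
  let ?\<pi> = "PNode R subs"
  let ?l = "lab R"
  have label_R: "rlabel R = Some ?l"
    using labelled_rule[OF labelled 1(1)] .
  have value_I: "causal_value (I b)" for b
    using model unfolding is_model_def causal_interp_def by auto
  define V where "V = (\<Union>s\<in>set subs. pverts s)"
  define E where "E = (\<Union>s\<in>set subs. pedges s)"
  define G where "G = gclose (V, E)"
  have G_causal: "causal_graph G"
    unfolding G_def E_def V_def by (rule gclose_causal) (use pedges_sub_pverts in fastforce)
  have G_contains: "fst G = V" "E \<subseteq> snd G"
    unfolding G_def gclose_def by auto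
  have G_le_sub: "gle G (pgraph s)" if "s \<in> set subs" for s
    using that G_contains unfolding gle_pgraph_iff[OF G_causal] V_def E_def by auto
  have "G \<in> body_val I (rpos R)"
  proof -
    have "G \<in> I b" if "b \<in> set (rpos R)" for b
    proof -
      obtain i where i: "i < length (rpos R)" "b = rpos R ! i"
        using \<open>b \<in> set (rpos R)\<close> by (auto simp: in_set_conv_nth)
      then have "subs ! i \<in> set subs" and "pgraph (subs ! i) \<in> I b"
        using 1(3) by (auto simp: list_all2_conv_all_nth)
      then show ?thesis
        using causal_value_downclosed[OF value_I _ G_causal G_le_sub] by blast
    qed
    then show ?thesis
      using G_causal unfolding body_val_def one_val_def by auto
  qed
  moreover have "gle (pgraph ?\<pi>) (gprod G ({?l}, {(?l, ?l)}))"
  proof (rule gle_gprodI[OF pgraph_causal])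
    have "V \<subseteq> pverts ?\<pi>" "E \<subseteq> pedges ?\<pi>"
      unfolding V_def E_def by auto
    then show "gle (pgraph ?\<pi>) G"
      unfolding G_def using pgraph_contains[of ?\<pi>] by (auto simp: gle_gclose_iff[OF pgraph_causal])
    have "(?l, ?l) \<in> snd (pgraph ?\<pi>)"
      using pverts_reach_root[of ?l ?\<pi>] by simp
    then show "gle (pgraph ?\<pi>) ({?l}, {(?l, ?l)})"
      using pgraph_contains(1)[of ?\<pi>] unfolding gle_def by auto
    have "(v, ?l) \<in> snd (pgraph ?\<pi>)" if "v \<in> V" for v
      using that pverts_reach_root[of v ?\<pi>] unfolding V_def by auto
    then show "fst G \<times> fst ({?l}, {(?l, ?l)}) \<subseteq> snd (pgraph ?\<pi>)"
      using G_contains(1) by auto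
  qed
  ultimately have "pgraph ?\<pi> \<in> vprod (body_val I (rpos R)) (label_val (rlabel R))"
    unfolding vprod_iff label_R using pgraph_causal label_graph_in_label_val by (intro conjI bexI)
  then show ?case
    using model 1(1,2) unfolding is_model_def by auto
qed

section \<open>Completeness: the proof graphs form a model\<close>

definition proof_interp :: "('a, 'l) program \<Rightarrow> ('a, 'l) cinterp" where
  "proof_interp P a = downset (pgraph ` {\<pi>. is_proof P \<pi> a})"

lemma proof_interp_model:
  assumes labelled: "completely_labelled P"
  shows "is_model P (proof_interp P)"
  unfolding is_model_def
proof (intro conjI ballI subsetI)
  show "causal_interp (proof_interp P)"
    unfolding causal_interp_def proof_interp_def using downset_value by blast
next
  fix R X
  assume R: "R \<in> P" and X: "X \<in> vprod (body_val (proof_interp P) (rpos R)) (label_val (rlabel R))"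
  let ?l = "lab R"
  have label_R: "rlabel R = Some ?l"
    using labelled_rule[OF labelled R] .
  from X obtain G G' where X_causal: "causal_graph X" and X_le: "gle X (gprod G G')"
    and G: "G \<in> body_val (proof_interp P) (rpos R)" and G': "G' \<in> label_val (Some ?l)"
    unfolding vprod_iff label_R by blast
  from G have G_causal: "causal_graph G"
    unfolding body_val_def one_val_def by auto
  have G'_causal: "causal_graph G'" and l_in: "?l \<in> fst G'"
    using label_val_SomeD[OF G'] by auto
  let ?good = "\<lambda>\<sigma> b. is_proof P \<sigma> b \<and> gle G (pgraph \<sigma>)"
  have "\<exists>\<sigma>. ?good \<sigma> b" if "b \<in> set (rpos R)" for b
    using G that unfolding body_val_def proof_interp_def downset_def by blast
  then have "?good (SOME \<sigma>. ?good \<sigma> b) b" if "b \<in> set (rpos R)" for b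
    using that by (rule someI_ex[OF meta_mp])
  then have "list_all2 ?good (map (\<lambda>b. SOME \<sigma>. ?good \<sigma> b) (rpos R)) (rpos R)"
    unfolding list_all2_map1 list_all2_same by blast
  then obtain subs where subs: "list_all2 ?good subs (rpos R)"
    by blast
  define \<pi> where "\<pi> = PNode R subs"
  have \<pi>_proof: "is_proof P \<pi> (rhead R)"
    unfolding \<pi>_def by (rule is_proof.intros[OF R refl]) (rule list_all2_mono[OF subs], auto)
  have "gle G (pgraph s)" if "s \<in> set subs" for s
    using subs that by (auto simp: list_all2_conv_all_nth in_set_conv_nth)
  then have sub_le: "pverts s \<subseteq> fst G \<and> pedges s \<subseteq> snd G" if "s \<in> set subs" for s
    using that gle_pgraph_iff[OF G_causal] by blast
  have "pverts \<pi> \<subseteq> fst G \<union> fst G'"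
    using sub_le l_in unfolding \<pi>_def by auto
  moreover have "pedges \<pi> \<subseteq> snd G \<union> fst G \<times> fst G'"
    using sub_le root_in_pverts l_in unfolding \<pi>_def by fastforce
  ultimately have "gle (gprod G G') (pgraph \<pi>)"
    unfolding gle_pgraph_iff[OF gprod_causal[OF G_causal G'_causal]]
    using gprod_contains[of G G'] by blast
  with X_le have "gle X (pgraph \<pi>)"
    using gle_trans by blast
  then show "X \<in> proof_interp P (rhead R)"
    using X_causal \<pi>_proof unfolding proof_interp_def downset_def by blast
qed

lemma least_model_eq_proof_interp:
  assumes labelled: "completely_labelled P" and least: "least_model P I"
  shows "I a = proof_interp P a"
proof
  show "I a \<subseteq> proof_interp P a"
    using least proof_interp_model[OF labelled] unfolding least_model_def by blast
next
  have model: "is_model P I"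
    using least unfolding least_model_def by auto
  then have "causal_value (I a)"
    unfolding is_model_def causal_interp_def by auto
  then show "proof_interp P a \<subseteq> I a"
    using model_contains_pgraph[OF labelled model]
    unfolding proof_interp_def downset_def by (blast intro: causal_value_downclosed)
qed

lemma nonredundant_graphs:
  "G \<in> pgraph ` nonredundant_proofs P p \<longleftrightarrow>
   G \<in> pgraph ` {\<pi>. is_proof P \<pi> p} \<and> (\<forall>H\<in>pgraph ` {\<pi>. is_proof P \<pi> p}. \<not> gless G H)"
  unfolding nonredundant_proofs_def redundant_def by blast

theorem theorem3:
  fixes P :: "('a, 'l) program" and p :: 'a and I :: "('a, 'l) cinterp"
  assumes "positive_program P"
    and "completely_labelled P"
    and "least_model P I"
  shows "\<forall>G. G \<in> pgraph ` nonredundant_proofs P p \<longleftrightarrow>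
             (G \<in> I p \<and> (\<forall>G'\<in>I p. \<not> gless G G'))"
proof
  fix G
  let ?S = "pgraph ` {\<pi>. is_proof P \<pi> p}"
  have "I p = downset ?S"
    using least_model_eq_proof_interp[OF assms(2,3)] by (simp add: proof_interp_def)
  moreover have "\<forall>H\<in>?S. causal_graph H"
    using pgraph_causal by blast
  ultimately show "G \<in> pgraph ` nonredundant_proofs P p \<longleftrightarrow>
                   (G \<in> I p \<and> (\<forall>G'\<in>I p. \<not> gless G G'))"
    by (simp only: nonredundant_graphs downset_maximal_iff)
qed

end
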